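(* Let $X,Y\in\mathcal L^2$ have identical continuous and strictly increasing marginal distribution functions, let $C$ be the copula of $(X,Y)$, and let $r\in[-1,1]$. The following are equivalent: (i) $(X,Y)\in\mathrm{IC}_r$; (ii) $\frac{C(u,v)+C(v,u)}{2}=rM(u,v)+(1-r)\Pi(u,v)$ for all $(u,v)\in[0,1]^2$; (iii) $r\in[0,1]$ and the positive Fréchet copula $C_r^{\mathrm F}$ is the copula of the random rearrangement of $(X,Y)$.
   Context: $\mathcal L^2$ is the set of non-degenerate real random variables with finite variance. $(X,Y)\in\mathrm{IC}_r$ means $\mathrm{Corr}(X,Y)=\mathrm{Corr}(g(X),g(Y))=r$ for every measurable $g$ with $g(X),g(Y)\in\mathcal L^2$. $M(u,v)=\min(u,v)$, $\Pi(u,v)=uv$, and $C_r^{\mathrm F}=rM+(1-r)\Pi$. With $(\pi_1,\pi_2)$ uniform on $\{(1,2),(2,1)\}$ independent of $(X_1,X_2)=(X,Y)$, the random rearrangement is $(X_{\pi_1},X_{\pi_2})$, whose law is the equal mixture of the laws of $(X,Y)$ and $(Y,X)$. *)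

theory Defs
  imports "HOL-Probability.Probability"
begin

definition dfun :: "'a measure \<Rightarrow> ('a \<Rightarrow> real) \<Rightarrow> real \<Rightarrow> real" where
  "dfun M X x = measure M {\<omega> \<in> space M. X \<omega> \<le> x}"

definition mean :: "'a measure \<Rightarrow> ('a \<Rightarrow> real) \<Rightarrow> real" where
  "mean M X = integral\<^sup>L M X"

definition var :: "'a measure \<Rightarrow> ('a \<Rightarrow> real) \<Rightarrow> real" where
  "var M X = integral\<^sup>L M (\<lambda>\<omega>. (X \<omega> - mean M X)\<^sup>2)"

definition cov :: "'a measure \<Rightarrow> ('a \<Rightarrow> real) \<Rightarrow> ('a \<Rightarrow> real) \<Rightarrow> real" where
  "cov M X Y = integral\<^sup>L M (\<lambda>\<omega>. (X \<omega> - mean M X) * (Y \<omega> - mean M Y))"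

definition corr :: "'a measure \<Rightarrow> ('a \<Rightarrow> real) \<Rightarrow> ('a \<Rightarrow> real) \<Rightarrow> real" where
  "corr M X Y = cov M X Y / sqrt (var M X * var M Y)"

definition L2 :: "'a measure \<Rightarrow> ('a \<Rightarrow> real) \<Rightarrow> bool" where
  "L2 M X \<longleftrightarrow> X \<in> borel_measurable M \<and> integrable M (\<lambda>\<omega>. (X \<omega>)\<^sup>2) \<and> var M X > 0"

definition IC :: "'a measure \<Rightarrow> real \<Rightarrow> ('a \<Rightarrow> real) \<Rightarrow> ('a \<Rightarrow> real) \<Rightarrow> bool" where
  "IC M r X Y \<longleftrightarrow> corr M X Y = r \<and>
     (\<forall>g \<in> borel_measurable borel. L2 M (\<lambda>\<omega>. g (X \<omega>)) \<and> L2 M (\<lambda>\<omega>. g (Y \<omega>))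
        \<longrightarrow> corr M (\<lambda>\<omega>. g (X \<omega>)) (\<lambda>\<omega>. g (Y \<omega>)) = r)"

text \<open>Bivariate copula (values on [0,1]^2 matter).\<close>
definition is_copula :: "(real \<Rightarrow> real \<Rightarrow> real) \<Rightarrow> bool" where
  "is_copula C \<longleftrightarrow>
     (\<forall>u \<in> {0..1}. C u 0 = 0 \<and> C 0 u = 0 \<and> C u 1 = u \<and> C 1 u = u) \<and>
     (\<forall>u1 u2 v1 v2. 0 \<le> u1 \<and> u1 \<le> u2 \<and> u2 \<le> 1 \<and> 0 \<le> v1 \<and> v1 \<le> v2 \<and> v2 \<le> 1 \<longrightarrow>
        C u2 v2 - C u2 v1 - C u1 v2 + C u1 v1 \<ge> 0)"

definition copula_of :: "'a measure \<Rightarrow> ('a \<Rightarrow> real) \<Rightarrow> ('a \<Rightarrow> real) \<Rightarrow> (real \<Rightarrow> real \<Rightarrow> real) \<Rightarrow> bool" where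
  "copula_of M X Y C \<longleftrightarrow> is_copula C \<and>
     (\<forall>x y. measure M {\<omega> \<in> space M. X \<omega> \<le> x \<and> Y \<omega> \<le> y} = C (dfun M X x) (dfun M Y y))"

definition M_cop :: "real \<Rightarrow> real \<Rightarrow> real" where "M_cop u v = min u v"
definition Pi_cop :: "real \<Rightarrow> real \<Rightarrow> real" where "Pi_cop u v = u * v"
definition frechet :: "real \<Rightarrow> real \<Rightarrow> real \<Rightarrow> real" where
  "frechet r u v = r * M_cop u v + (1 - r) * Pi_cop u v"

text \<open>Random rearrangement: pair with an independent fair coin b;
  (pi1,pi2) = (1,2) if b, (2,1) otherwise.\<close>
definition rearr_space :: "'a measure \<Rightarrow> ('a \<times> bool) measure" where
  "rearr_space M = M \<Otimes>\<^sub>M measure_pmf (bernoulli_pmf (1/2))"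
definition rearr1 :: "('a \<Rightarrow> real) \<Rightarrow> ('a \<Rightarrow> real) \<Rightarrow> 'a \<times> bool \<Rightarrow> real" where
  "rearr1 X Y p = (if snd p then X (fst p) else Y (fst p))"
definition rearr2 :: "('a \<Rightarrow> real) \<Rightarrow> ('a \<Rightarrow> real) \<Rightarrow> 'a \<times> bool \<Rightarrow> real" where
  "rearr2 X Y p = (if snd p then Y (fst p) else X (fst p))"

end

theory Submission
  imports Defs
begin

text \<open>
  (ii) \<open>\<Leftrightarrow>\<close> (iii): the random rearrangement has marginals \<open>F\<close> and joint distribution function
  \<open>(C (F x) (F y) + C (F y) (F x)) / 2\<close>, so its copula is the symmetrization of \<open>C\<close>. That \<open>r\<close>
  must be nonnegative follows from \<open>C h h \<ge> 0\<close> for small \<open>h\<close>.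

  (ii) \<open>\<Longrightarrow>\<close> (i): \<open>g (X) * g (Y)\<close> is symmetric in \<open>X, Y\<close>, so its expectation only depends on the
  law of the rearrangement. By (ii) that law is the mixture which, with probability \<open>r\<close>, takes
  the pair \<open>(U, U)\<close> and otherwise two independent copies \<open>(U, V)\<close> of \<open>X\<close>. Hence
  \<open>E g(X) g(Y) = r E g(X)\<^sup>2 + (1 - r) (E g(X))\<^sup>2\<close>, i.e. \<open>Cov (g X, g Y) = r Var (g X)\<close>.

  (i) \<open>\<Longrightarrow>\<close> (ii): for the test function \<open>g = 1\<^bsub>(-\<infinity>, a]\<^esub> + 1\<^bsub>(-\<infinity>, b]\<^esub>\<close>, the covariance of
  \<open>g X\<close> and \<open>g Y\<close> is the sum of \<open>C\<close> over the grid \<open>{F a, F b}\<^sup>2\<close> minus \<open>(F a + F b)\<^sup>2\<close>, and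
  the variances are the same expression with \<open>M\<close> in place of \<open>C\<close>. So \<open>Corr = r\<close> says that
  \<open>C\<close> and \<open>C\<^sub>r\<^sup>F\<close> have equal grid sums, and by continuity of \<open>F\<close> every grid in \<open>(0,1)\<^sup>2\<close> occurs.
\<close>

section \<open>Product measures and the Frechet mixture\<close>

lemma (in sigma_finite_measure) measure_pair_measure_Times:
  assumes "A \<in> sets N" "B \<in> sets M"
  shows "measure (N \<Otimes>\<^sub>M M) (A \<times> B) = measure N A * measure M B"
  using emeasure_pair_measure_Times[OF assms] by (simp add: measure_def enn2real_mult)

lemma measure_pair_bernoulli_Un:
  assumes "prob_space N" "0 \<le> p" "p \<le> 1" "A \<in> sets N" "B \<in> sets N"
  shows "measure (N \<Otimes>\<^sub>M bernoulli_pmf p) (A \<times> {True} \<union> B \<times> {False})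
    = p * measure N A + (1 - p) * measure N B"
proof -
  interpret pair_prob_space N "bernoulli_pmf p"
    using assms(1) by (simp add: pair_prob_space_def pair_sigma_finite_def prob_space_imp_sigma_finite
        prob_space_measure_pmf)
  have "measure (N \<Otimes>\<^sub>M bernoulli_pmf p) (A \<times> {True} \<union> B \<times> {False}) =
      measure (N \<Otimes>\<^sub>M bernoulli_pmf p) (A \<times> {True}) + measure (N \<Otimes>\<^sub>M bernoulli_pmf p) (B \<times> {False})"
    using assms by (intro finite_measure_Union) auto
  then show ?thesis
    using assms by (simp add: measure_pmf.measure_pair_measure_Times measure_pmf_single)
qed

lemma integral_pair_bernoulli:
  fixes f :: "'a \<times> bool \<Rightarrow> real"
  assumes "sigma_finite_measure N" "0 \<le> p" "p \<le> 1"
    and [measurable]: "f \<in> borel_measurable (N \<Otimes>\<^sub>M bernoulli_pmf p)"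
    and "integrable N (\<lambda>x. f (x, True))" "integrable N (\<lambda>x. f (x, False))"
  shows "integrable (N \<Otimes>\<^sub>M bernoulli_pmf p) f" (is ?int)
    and "(\<integral>z. f z \<partial>(N \<Otimes>\<^sub>M bernoulli_pmf p))
      = p * (\<integral>x. f (x, True) \<partial>N) + (1 - p) * (\<integral>x. f (x, False) \<partial>N)"
proof -
  interpret pair_sigma_finite N "bernoulli_pmf p"
    using assms(1) by (simp add: pair_sigma_finite_def prob_space_imp_sigma_finite prob_space_measure_pmf)
  show ?int
  proof (rule Fubini_integrable)
    show "integrable N (\<lambda>x. \<integral>c. norm (f (x, c)) \<partial>bernoulli_pmf p)"
      using assms by simp
  qed (auto intro!: integrable_measure_pmf_finite)
  then have "(\<integral>z. f z \<partial>(N \<Otimes>\<^sub>M bernoulli_pmf p)) = (\<integral>x. (\<integral>c. f (x, c) \<partial>bernoulli_pmf p) \<partial>N)"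
    by (rule integral_fst'[symmetric])
  then show "(\<integral>z. f z \<partial>(N \<Otimes>\<^sub>M bernoulli_pmf p))
      = p * (\<integral>x. f (x, True) \<partial>N) + (1 - p) * (\<integral>x. f (x, False) \<partial>N)"
    using assms by (simp add: algebra_simps)
qed

lemma measure_eqI_atMost_real_pair:
  fixes Q1 Q2 :: "(real \<times> real) measure"
  assumes "finite_measure Q1" "finite_measure Q2" "sets Q1 = sets borel" "sets Q2 = sets borel"
    and eq: "\<And>x y. measure Q1 {..(x, y)} = measure Q2 {..(x, y)}"
  shows "Q1 = Q2"
proof (rule measure_eqI_generator_eq[where \<Omega>=UNIV and E="range atMost" and A="\<lambda>i. {..(real i, real i)}"])
  show "Int_stable (range atMost :: (real \<times> real) set set)"
  proof (rule Int_stableI_image)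
    fix a b :: "real \<times> real"
    have "{..a} \<inter> {..b} = {..inf a b}" by auto
    then show "\<exists>c\<in>UNIV. {..a} \<inter> {..b} = {..c}" by blast
  qed
  have "sets (borel :: (real \<times> real) measure) = sigma_sets UNIV (range atMost)"
    by (subst borel_eq_atMost) (simp add: sets_measure_of)
  then show "sets Q1 = sigma_sets UNIV (range atMost)" "sets Q2 = sigma_sets UNIV (range atMost)"
    using assms(3,4) by simp_all
  show "emeasure Q1 Z = emeasure Q2 Z" if "Z \<in> range atMost" for Z
    using that eq finite_measure.emeasure_eq_measure[OF assms(1)]
      finite_measure.emeasure_eq_measure[OF assms(2)]
    by auto
  show "(\<Union>i. {..(real i, real i)}) = (UNIV :: (real \<times> real) set)"
  proof safe
    fix a b :: real
    obtain n :: nat where "max a b \<le> real n" using real_arch_simple by blast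
    then show "(a, b) \<in> (\<Union>i. {..(real i, real i)})" by (auto simp: less_eq_prod_def)
  qed auto
  show "emeasure Q1 {..(real i, real i)} \<noteq> \<infinity>" for i
    using finite_measure.emeasure_eq_measure[OF assms(1)] by simp
qed auto

lemma (in pair_sigma_finite)
  fixes f g :: "_ \<Rightarrow> real"
  assumes f: "integrable M1 f" and g: "integrable M2 g"
  shows integrable_pair_mult: "integrable (M1 \<Otimes>\<^sub>M M2) (\<lambda>z. f (fst z) * g (snd z))"
    and integral_pair_mult: "(\<integral>z. f (fst z) * g (snd z) \<partial>(M1 \<Otimes>\<^sub>M M2)) = integral\<^sup>L M1 f * integral\<^sup>L M2 g"
proof -
  have [measurable]: "f \<in> borel_measurable M1" "g \<in> borel_measurable M2"
    using f g by auto
  show int: "integrable (M1 \<Otimes>\<^sub>M M2) (\<lambda>z. f (fst z) * g (snd z))"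
  proof (rule Fubini_integrable)
    have "(\<integral>y. norm (f x * g y) \<partial>M2) = \<bar>f x\<bar> * (\<integral>y. \<bar>g y\<bar> \<partial>M2)" for x
      by (simp add: abs_mult)
    then show "integrable M1 (\<lambda>x. \<integral>y. norm (f (fst (x, y)) * g (snd (x, y))) \<partial>M2)"
      using f by simp
  qed (use g in auto)
  have "(\<integral>z. f (fst z) * g (snd z) \<partial>(M1 \<Otimes>\<^sub>M M2)) = (\<integral>x. (\<integral>y. f x * g y \<partial>M2) \<partial>M1)"
    using integral_fst'[OF int] by simp
  then show "(\<integral>z. f (fst z) * g (snd z) \<partial>(M1 \<Otimes>\<^sub>M M2)) = integral\<^sup>L M1 f * integral\<^sup>L M2 g"
    by simp
qed

text \<open>With probability \<open>r\<close> the pair \<open>(x, x)\<close>, otherwise the independent pair \<open>(x, y)\<close>: its joint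
  distribution function is \<open>C\<^sub>r\<^sup>F\<close> applied to the marginals.\<close>

definition frechet_mixture :: "real measure \<Rightarrow> real \<Rightarrow> (real \<times> real) measure" where
  "frechet_mixture P r = distr ((P \<Otimes>\<^sub>M P) \<Otimes>\<^sub>M bernoulli_pmf r) borel
     (\<lambda>((x, y), c). (x, if c then x else y))"

context real_distribution
begin

lemma measurable_frechet_mixture_map[measurable]:
  "(\<lambda>((x, y), c). (x, if c then x else y)) \<in> (M \<Otimes>\<^sub>M M) \<Otimes>\<^sub>M bernoulli_pmf r \<rightarrow>\<^sub>M borel"
proof -
  have eq: "(\<lambda>((x, y), c). (x, if c then x else y))
      = (\<lambda>q. (fst (fst q), if snd q then fst (fst q) else snd (fst q)))"
    by auto
  show ?thesis unfolding eq by measurable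
qed

lemma prob_space_frechet_mixture: "prob_space (frechet_mixture M r)"
  unfolding frechet_mixture_def
  by (intro prob_space.prob_space_distr prob_space_pair prob_space_axioms prob_space_measure_pmf)
     measurable

lemma measure_frechet_mixture_atMost:
  assumes "0 \<le> r" "r \<le> 1"
  shows "measure (frechet_mixture M r) {..(x, y)} = r * cdf M (min x y) + (1 - r) * (cdf M x * cdf M y)"
proof -
  have "(\<lambda>((x, y), c). (x, if c then x else y)) -` {..(x, y)} \<inter> space ((M \<Otimes>\<^sub>M M) \<Otimes>\<^sub>M bernoulli_pmf r)
      = ({..min x y} \<times> UNIV) \<times> {True} \<union> ({..x} \<times> {..y}) \<times> {False}"
    by (auto simp: space_pair_measure split: if_splits)
  then have "measure (frechet_mixture M r) {..(x, y)}
      = measure ((M \<Otimes>\<^sub>M M) \<Otimes>\<^sub>M bernoulli_pmf r)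
          (({..min x y} \<times> UNIV) \<times> {True} \<union> ({..x} \<times> {..y}) \<times> {False})"
    unfolding frechet_mixture_def by (subst measure_distr) auto
  also have "\<dots> = r * measure (M \<Otimes>\<^sub>M M) ({..min x y} \<times> UNIV) + (1 - r) * measure (M \<Otimes>\<^sub>M M) ({..x} \<times> {..y})"
    using assms by (intro measure_pair_bernoulli_Un prob_space_pair prob_space_axioms) auto
  also have "\<dots> = r * cdf M (min x y) + (1 - r) * (cdf M x * cdf M y)"
    using prob_space by (simp add: measure_pair_measure_Times cdf_def)
  finally show ?thesis .
qed

lemma integral_frechet_mixture_mult:
  assumes "0 \<le> r" "r \<le> 1" and [measurable]: "g \<in> borel_measurable borel"
    and "integrable M (\<lambda>x. (g x)\<^sup>2)"
  shows "(\<integral>z. g (fst z) * g (snd z) \<partial>frechet_mixture M r)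
    = r * (\<integral>x. (g x)\<^sup>2 \<partial>M) + (1 - r) * (\<integral>x. g x \<partial>M)\<^sup>2"
proof -
  have g: "integrable M g"
    by (rule square_integrable_imp_integrable[OF _ assms(4)]) measurable
  have M_UNIV: "measure M UNIV = 1"
    using prob_space by simp
  interpret pair_prob_space M M
    by (simp add: pair_prob_space_def pair_sigma_finite_def prob_space_axioms prob_space_imp_sigma_finite)
  have sq: "integrable (M \<Otimes>\<^sub>M M) (\<lambda>z. (g (fst z))\<^sup>2)"
      "(\<integral>z. (g (fst z))\<^sup>2 \<partial>(M \<Otimes>\<^sub>M M)) = (\<integral>x. (g x)\<^sup>2 \<partial>M)"
    using assms(4) integrable_pair_mult[of "\<lambda>x. (g x)\<^sup>2" "\<lambda>_. 1"]
      integral_pair_mult[of "\<lambda>x. (g x)\<^sup>2" "\<lambda>_. 1"]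
    by (simp_all add: M_UNIV)
  have prod: "integrable (M \<Otimes>\<^sub>M M) (\<lambda>z. g (fst z) * g (snd z))"
      "(\<integral>z. g (fst z) * g (snd z) \<partial>(M \<Otimes>\<^sub>M M)) = (\<integral>x. g x \<partial>M)\<^sup>2"
    using g integrable_pair_mult[of g g] integral_pair_mult[of g g]
    by (simp_all add: power2_eq_square)
  have [measurable]: "(\<lambda>z. g (fst z) * g (snd z)) \<in> borel_measurable (borel :: (real \<times> real) measure)"
    unfolding borel_prod[symmetric] by measurable
  have "(\<integral>z. g (fst z) * g (snd z) \<partial>frechet_mixture M r)
      = (\<integral>q. g (fst (fst q)) * g (if snd q then fst (fst q) else snd (fst q))
          \<partial>((M \<Otimes>\<^sub>M M) \<Otimes>\<^sub>M bernoulli_pmf r))"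
    unfolding frechet_mixture_def by (subst integral_distr) (auto simp: case_prod_beta)
  also have "\<dots> = r * (\<integral>z. (g (fst z))\<^sup>2 \<partial>(M \<Otimes>\<^sub>M M)) + (1 - r) * (\<integral>z. g (fst z) * g (snd z) \<partial>(M \<Otimes>\<^sub>M M))"
    using assms sq prod
    by (subst integral_pair_bernoulli(2))
       (auto simp: power2_eq_square prob_space_imp_sigma_finite prob_space_pair prob_space_axioms)
  finally show ?thesis
    using sq prod by simp
qed

end

section \<open>Moments and distribution functions\<close>

lemma integrable_mult_square_integrable:
  fixes f h :: "'a \<Rightarrow> real"
  assumes "f \<in> borel_measurable M" "h \<in> borel_measurable M"
    and "integrable M (\<lambda>x. (f x)\<^sup>2)" "integrable M (\<lambda>x. (h x)\<^sup>2)"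
  shows "integrable M (\<lambda>x. f x * h x)"
proof (rule Bochner_Integration.integrable_bound)
  show "integrable M (\<lambda>x. (f x)\<^sup>2 + (h x)\<^sup>2)"
    using assms by simp
  have "\<bar>f x\<bar> * \<bar>h x\<bar> \<le> (f x)\<^sup>2 + (h x)\<^sup>2" for x
    using sum_squares_bound[of "\<bar>f x\<bar>" "\<bar>h x\<bar>"]
      mult_nonneg_nonneg[OF abs_ge_zero abs_ge_zero, of "f x" "h x"]
    unfolding power2_abs by linarith
  then show "AE x in M. norm (f x * h x) \<le> norm ((f x)\<^sup>2 + (h x)\<^sup>2)"
    by (simp add: abs_mult)
qed (use assms in simp)

lemma var_eq_cov: "var M f = cov M f f"
  by (simp add: var_def cov_def power2_eq_square)

lemma corr_eq_iff_cov_eq: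
  assumes "var M f = V" "var M h = V" "0 < V"
  shows "corr M f h = r \<longleftrightarrow> cov M f h = r * V"
  using assms by (auto simp: corr_def field_simps)

lemma (in prob_space) cov_eq:
  fixes f h :: "'a \<Rightarrow> real"
  assumes [measurable]: "f \<in> borel_measurable M" "h \<in> borel_measurable M"
    and "integrable M (\<lambda>x. (f x)\<^sup>2)" "integrable M (\<lambda>x. (h x)\<^sup>2)"
  shows "cov M f h = (\<integral>x. f x * h x \<partial>M) - (\<integral>x. f x \<partial>M) * (\<integral>x. h x \<partial>M)"
proof -
  have "integrable M f" "integrable M h" "integrable M (\<lambda>x. f x * h x)"
    using assms by (auto intro: square_integrable_imp_integrable integrable_mult_square_integrable)
  then show ?thesis
    unfolding cov_def mean_def by (simp add: algebra_simps prob_space)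
qed

lemma (in prob_space) dfun_eq_cdf: "random_variable borel X \<Longrightarrow> dfun M X = cdf (distr M borel X)"
  by (auto simp: fun_eq_iff cdf_def measure_distr dfun_def vimage_def Int_def conj_commute)

lemma (in prob_space) distr_eq_if_dfun_eq:
  "random_variable borel X \<Longrightarrow> random_variable borel Y \<Longrightarrow> dfun M X = dfun M Y
    \<Longrightarrow> distr M borel X = distr M borel Y"
  by (rule cdf_unique) (auto simp: dfun_eq_cdf)

lemma (in prob_space) dfun_mono:
  assumes [measurable]: "random_variable borel X" and "s \<le> t"
  shows "dfun M X s \<le> dfun M X t"
  unfolding dfun_def using assms(2) by (intro finite_measure_mono) auto

lemma (in prob_space) measure_le_min:
  assumes "random_variable borel X"
  shows "measure M {\<omega> \<in> space M. X \<omega> \<le> c \<and> X \<omega> \<le> d} = min (dfun M X c) (dfun M X d)"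
proof -
  have "measure M {\<omega> \<in> space M. X \<omega> \<le> c \<and> X \<omega> \<le> d} = dfun M X (min c d)"
    unfolding dfun_def by (rule arg_cong[where f="measure M"]) auto
  then show ?thesis
    using dfun_mono[OF assms, of c d] dfun_mono[OF assms, of d c] by (auto simp: min_def)
qed

lemma (in real_distribution) cdf_surj:
  assumes "continuous_on UNIV (cdf M)" "0 < u" "u < 1"
  shows "\<exists>x. cdf M x = u"
proof -
  obtain a where a: "cdf M a < u"
    using order_tendstoD(2)[OF cdf_lim_at_bot \<open>0 < u\<close>] by (auto simp: eventually_at_bot_linorder)
  obtain b where b: "u < cdf M b"
    using order_tendstoD(1)[OF cdf_lim_at_top_prob \<open>u < 1\<close>] by (auto simp: eventually_at_top_linorder)
  then have "a \<le> b"
    using a cdf_nondecreasing[of b a] by fastforce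
  then show ?thesis
    using IVT'[of "cdf M" a u b] a b continuous_on_subset[OF assms(1)] by fastforce
qed

section \<open>Copulas\<close>

lemma is_copula_frechet:
  assumes "0 \<le> r" "r \<le> 1"
  shows "is_copula (frechet r)"
  unfolding is_copula_def
proof (intro conjI ballI allI impI)
  fix u :: real
  show "frechet r u 0 = 0" "frechet r 0 u = 0" if "u \<in> {0..1}"
    using that by (auto simp: frechet_def M_cop_def Pi_cop_def)
  show "frechet r u 1 = u" "frechet r 1 u = u" if "u \<in> {0..1}"
    using that by (auto simp: frechet_def M_cop_def Pi_cop_def algebra_simps)
next
  fix u1 u2 v1 v2 :: real
  assume "0 \<le> u1 \<and> u1 \<le> u2 \<and> u2 \<le> 1 \<and> 0 \<le> v1 \<and> v1 \<le> v2 \<and> v2 \<le> 1"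
  then have "0 \<le> min u2 v2 - min u2 v1 - min u1 v2 + min u1 v1" "0 \<le> (u2 - u1) * (v2 - v1)"
    by (auto simp: min_def)
  then have "0 \<le> r * (min u2 v2 - min u2 v1 - min u1 v2 + min u1 v1) + (1 - r) * ((u2 - u1) * (v2 - v1))"
    using assms by simp
  then show "0 \<le> frechet r u2 v2 - frechet r u2 v1 - frechet r u1 v2 + frechet r u1 v1"
    by (simp add: frechet_def M_cop_def Pi_cop_def algebra_simps)
qed

lemma copula_diag_nonneg:
  assumes "is_copula C" "0 \<le> h" "h \<le> 1"
  shows "0 \<le> C h h"
  using assms unfolding is_copula_def by (force dest: spec[of _ 0] spec[of _ h])

definition symmetrization_eq_frechet :: "(real \<Rightarrow> real \<Rightarrow> real) \<Rightarrow> real \<Rightarrow> bool" where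
  "symmetrization_eq_frechet C r \<longleftrightarrow> (\<forall>u\<in>{0..1}. \<forall>v\<in>{0..1}. (C u v + C v u) / 2 = frechet r u v)"

lemma symmetrization_eq_frechetI:
  assumes "is_copula C"
    and "\<And>u v. 0 < u \<Longrightarrow> u < 1 \<Longrightarrow> 0 < v \<Longrightarrow> v < 1 \<Longrightarrow> (C u v + C v u) / 2 = frechet r u v"
  shows "symmetrization_eq_frechet C r"
  unfolding symmetrization_eq_frechet_def
proof (intro ballI)
  fix u v :: real
  assume "u \<in> {0..1}" "v \<in> {0..1}"
  then consider "0 < u" "u < 1" "0 < v" "v < 1" | "u = 0 \<or> u = 1 \<or> v = 0 \<or> v = 1"
    by fastforce
  then show "(C u v + C v u) / 2 = frechet r u v"
  proof cases
    case 2
    then show ?thesis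
      using assms(1) \<open>u \<in> {0..1}\<close> \<open>v \<in> {0..1}\<close>
      by (auto simp: is_copula_def frechet_def M_cop_def Pi_cop_def algebra_simps)
  qed (use assms(2) in blast)
qed

lemma symmetrization_eq_frechet_imp_nonneg:
  assumes "is_copula C" "symmetrization_eq_frechet C r" "r \<le> 1"
  shows "0 \<le> r"
proof (rule ccontr)
  assume "\<not> 0 \<le> r"
  \<comment> \<open>On the diagonal \<open>C h h = h * (r + (1 - r) * h)\<close>, which is negative for small \<open>h > 0\<close>.\<close>
  define h where "h = - r / (2 * (1 - r))"
  have "0 < h" "h \<le> 1"
    using \<open>\<not> 0 \<le> r\<close> assms(3) by (auto simp: h_def field_simps)
  have "(C h h + C h h) / 2 = frechet r h h"
    using assms(2) \<open>0 < h\<close> \<open>h \<le> 1\<close> by (simp add: symmetrization_eq_frechet_def)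
  then have "C h h = h * (r + (1 - r) * h)"
    by (simp add: frechet_def M_cop_def Pi_cop_def algebra_simps)
  moreover have "r + (1 - r) * h = r / 2"
    using \<open>\<not> 0 \<le> r\<close> by (simp add: h_def field_simps)
  ultimately have "C h h = h * (r / 2)"
    by simp
  moreover have "h * (r / 2) < 0"
    using \<open>0 < h\<close> \<open>\<not> 0 \<le> r\<close> by (simp add: mult_pos_neg)
  ultimately show False
    using copula_diag_nonneg[OF assms(1), of h] \<open>0 < h\<close> \<open>h \<le> 1\<close> by linarith
qed

definition grid_sum :: "(real \<Rightarrow> real \<Rightarrow> real) \<Rightarrow> real \<Rightarrow> real \<Rightarrow> real" where
  "grid_sum D u v = D u u + D u v + D v u + D v v"

lemma grid_sum_frechet: "grid_sum (frechet r) u v = r * grid_sum M_cop u v + (1 - r) * (u + v)\<^sup>2"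
  by (simp add: grid_sum_def frechet_def Pi_cop_def algebra_simps power2_eq_square)

lemma grid_sum_M_cop_gt:
  assumes "0 < u" "u < 1" "0 < v" "v < 1"
  shows "(u + v)\<^sup>2 < grid_sum M_cop u v"
proof -
  have "grid_sum M_cop u v - (u + v)\<^sup>2 = u * (1 - u) + v * (1 - v) + 2 * (min u v - u * v)"
    by (simp add: grid_sum_def M_cop_def min.commute algebra_simps power2_eq_square)
  moreover have "0 < u * (1 - u)" "0 < v * (1 - v)" "0 \<le> min u v - u * v"
    using assms by (auto simp: min_def mult_le_cancel_left1 mult_le_cancel_right1)
  ultimately show ?thesis
    by (smt (verit))
qed

section \<open>Indicator test functions and the random rearrangement\<close>

definition two_step :: "real \<Rightarrow> real \<Rightarrow> real \<Rightarrow> real" where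
  "two_step a b x = indicator {..a} x + indicator {..b} x"

lemma two_step_measurable[measurable]: "two_step a b \<in> borel_measurable borel"
  unfolding two_step_def[abs_def] by measurable

context prob_space
begin

lemma integral_indicator_atMost:
  assumes [measurable]: "random_variable borel f"
  shows "(\<integral>\<omega>. indicator {..c} (f \<omega>) \<partial>M) = dfun M f c"
proof -
  have "(\<lambda>\<omega>. indicator {..c} (f \<omega>) :: real) = indicator {\<omega>. f \<omega> \<le> c}"
    by (auto simp: indicator_def)
  then show ?thesis
    by (simp add: dfun_def Int_def conj_commute)
qed

lemma integral_indicator_atMost_mult:
  assumes [measurable]: "random_variable borel f" "random_variable borel g"
  shows "(\<integral>\<omega>. indicator {..c} (f \<omega>) * indicator {..d} (g \<omega>) \<partial>M)
    = measure M {\<omega> \<in> space M. f \<omega> \<le> c \<and> g \<omega> \<le> d}"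
proof -
  have "(\<lambda>\<omega>. indicator {..c} (f \<omega>) * indicator {..d} (g \<omega>) :: real) = indicator {\<omega>. f \<omega> \<le> c \<and> g \<omega> \<le> d}"
    by (auto simp: indicator_def)
  then show ?thesis
    by (simp add: Int_def conj_commute)
qed

lemma integrable_two_step_square:
  "random_variable borel f \<Longrightarrow> integrable M (\<lambda>\<omega>. (two_step a b (f \<omega>))\<^sup>2)"
  by (rule integrable_const_bound[where B=4]) (auto simp: two_step_def indicator_def)

lemma cov_two_step:
  assumes [measurable]: "random_variable borel f" "random_variable borel g"
  shows "cov M (\<lambda>\<omega>. two_step a b (f \<omega>)) (\<lambda>\<omega>. two_step a b (g \<omega>))
    = grid_sum (\<lambda>c d. measure M {\<omega> \<in> space M. f \<omega> \<le> c \<and> g \<omega> \<le> d}) a b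
      - (dfun M f a + dfun M f b) * (dfun M g a + dfun M g b)"
proof -
  have bounded: "integrable M (\<lambda>\<omega>. indicator A (h \<omega>) * indicator B (k \<omega>) :: real)"
    if [measurable]: "random_variable borel h" "random_variable borel k"
      "A \<in> sets borel" "B \<in> sets borel" for h k A B
    by (rule integrable_const_bound[where B=1]) (auto simp: indicator_def)
  have "(\<integral>\<omega>. two_step a b (h \<omega>) \<partial>M) = dfun M h a + dfun M h b"
    if [measurable]: "random_variable borel h" for h
    using bounded[of h h "{..a}" UNIV] bounded[of h h "{..b}" UNIV]
    by (simp add: two_step_def integral_indicator_atMost)
  moreover have "(\<integral>\<omega>. two_step a b (f \<omega>) * two_step a b (g \<omega>) \<partial>M)
      = grid_sum (\<lambda>c d. measure M {\<omega> \<in> space M. f \<omega> \<le> c \<and> g \<omega> \<le> d}) a b"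
    by (simp add: two_step_def grid_sum_def distrib_left distrib_right bounded
        integral_indicator_atMost_mult)
  ultimately show ?thesis
    by (simp add: cov_eq integrable_two_step_square)
qed

lemma space_rearr_space: "space (rearr_space M) = space M \<times> UNIV"
  by (simp add: rearr_space_def space_pair_measure)

lemma prob_space_rearr_space: "prob_space (rearr_space M)"
  unfolding rearr_space_def by (intro prob_space_pair prob_space_axioms prob_space_measure_pmf)

lemma measurable_rearr[measurable]:
  assumes [measurable]: "random_variable borel X" "random_variable borel Y"
  shows "rearr1 X Y \<in> borel_measurable (rearr_space M)" "rearr2 X Y \<in> borel_measurable (rearr_space M)"
  unfolding rearr1_def rearr2_def rearr_space_def by measurable

lemma measure_rearr_le:
  assumes [measurable]: "random_variable borel X" "random_variable borel Y"
  shows "measure (rearr_space M) {p \<in> space (rearr_space M). rearr1 X Y p \<le> x \<and> rearr2 X Y p \<le> y}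
    = (measure M {\<omega> \<in> space M. X \<omega> \<le> x \<and> Y \<omega> \<le> y} + measure M {\<omega> \<in> space M. X \<omega> \<le> y \<and> Y \<omega> \<le> x}) / 2"
proof -
  have "{p \<in> space (rearr_space M). rearr1 X Y p \<le> x \<and> rearr2 X Y p \<le> y}
      = {\<omega> \<in> space M. X \<omega> \<le> x \<and> Y \<omega> \<le> y} \<times> {True} \<union> {\<omega> \<in> space M. X \<omega> \<le> y \<and> Y \<omega> \<le> x} \<times> {False}"
    by (auto simp: space_rearr_space rearr1_def rearr2_def)
  then show ?thesis
    by (simp add: rearr_space_def measure_pair_bernoulli_Un prob_space_axioms)
qed

lemma
  assumes [measurable]: "random_variable borel X" "random_variable borel Y"
  shows dfun_rearr1: "dfun (rearr_space M) (rearr1 X Y) x = (dfun M X x + dfun M Y x) / 2"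
    and dfun_rearr2: "dfun (rearr_space M) (rearr2 X Y) x = (dfun M X x + dfun M Y x) / 2"
proof -
  have "{p \<in> space (rearr_space M). rearr1 X Y p \<le> x}
      = {\<omega> \<in> space M. X \<omega> \<le> x} \<times> {True} \<union> {\<omega> \<in> space M. Y \<omega> \<le> x} \<times> {False}"
    "{p \<in> space (rearr_space M). rearr2 X Y p \<le> x}
      = {\<omega> \<in> space M. Y \<omega> \<le> x} \<times> {True} \<union> {\<omega> \<in> space M. X \<omega> \<le> x} \<times> {False}"
    by (auto simp: space_rearr_space rearr1_def rearr2_def)
  then show "dfun (rearr_space M) (rearr1 X Y) x = (dfun M X x + dfun M Y x) / 2"
    "dfun (rearr_space M) (rearr2 X Y) x = (dfun M X x + dfun M Y x) / 2"
    by (simp_all add: dfun_def rearr_space_def measure_pair_bernoulli_Un prob_space_axioms)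
qed

lemma integral_rearr_symmetric:
  fixes h :: "real \<Rightarrow> real \<Rightarrow> real"
  assumes [measurable]: "random_variable borel X" "random_variable borel Y"
    "(\<lambda>\<omega>. h (X \<omega>) (Y \<omega>)) \<in> borel_measurable M"
    and symmetric: "\<And>a b. h a b = h b a"
  shows "(\<integral>p. h (rearr1 X Y p) (rearr2 X Y p) \<partial>rearr_space M) = (\<integral>\<omega>. h (X \<omega>) (Y \<omega>) \<partial>M)"
proof -
  have "(\<integral>p. h (rearr1 X Y p) (rearr2 X Y p) \<partial>rearr_space M)
      = (\<integral>p. h (X (fst p)) (Y (fst p)) \<partial>rearr_space M)"
    using symmetric by (intro Bochner_Integration.integral_cong) (auto simp: rearr1_def rearr2_def)
  also have "\<dots> = (\<integral>\<omega>. h (X \<omega>) (Y \<omega>) \<partial>distr (rearr_space M) M fst)"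
    by (rule integral_distr[symmetric]) (auto simp: rearr_space_def)
  also have "distr (rearr_space M) M fst = M"
    unfolding rearr_space_def by (rule prob_space.distr_pair_fst[OF prob_space_measure_pmf])
  finally show ?thesis .
qed

end

section \<open>Pairs with a common marginal\<close>

locale common_marginal_copula = prob_space M for M :: "'a measure" +
  fixes X Y :: "'a \<Rightarrow> real" and C :: "real \<Rightarrow> real \<Rightarrow> real"
  assumes X_measurable[measurable]: "X \<in> borel_measurable M"
    and Y_measurable[measurable]: "Y \<in> borel_measurable M"
    and dfun_Y: "dfun M Y = dfun M X"
    and copula: "copula_of M X Y C"
begin

abbreviation F :: "real \<Rightarrow> real" where "F \<equiv> dfun M X"

lemma is_copula_C: "is_copula C"
  using copula by (simp add: copula_of_def)

lemma measure_XY_le: "measure M {\<omega> \<in> space M. X \<omega> \<le> x \<and> Y \<omega> \<le> y} = C (F x) (F y)"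
  using copula dfun_Y by (simp add: copula_of_def)

lemma F_range: "F x \<in> {0..1}"
  by (simp add: dfun_def)

lemma F_min: "F (min x y) = min (F x) (F y)"
  using dfun_mono[OF X_measurable, of x y] dfun_mono[OF X_measurable, of y x] by (auto simp: min_def)

lemma F_surj:
  assumes "continuous_on UNIV F" "0 < u" "u < 1"
  shows "\<exists>x. F x = u"
  using real_distribution.cdf_surj[of "distr M borel X"] assms by (simp add: dfun_eq_cdf)

lemma distr_Y: "distr M borel Y = distr M borel X"
  by (rule distr_eq_if_dfun_eq) (simp_all add: dfun_Y)

lemma
  fixes \<phi> :: "real \<Rightarrow> real"
  assumes [measurable]: "\<phi> \<in> borel_measurable borel"
  shows integrable_Y_iff: "integrable M (\<lambda>\<omega>. \<phi> (Y \<omega>)) \<longleftrightarrow> integrable M (\<lambda>\<omega>. \<phi> (X \<omega>))"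
    and integral_Y: "(\<integral>\<omega>. \<phi> (Y \<omega>) \<partial>M) = (\<integral>\<omega>. \<phi> (X \<omega>) \<partial>M)"
  using integrable_distr_eq[of Y M borel \<phi>] integrable_distr_eq[of X M borel \<phi>]
    integral_distr[of Y M borel \<phi>] integral_distr[of X M borel \<phi>]
  by (simp_all add: distr_Y)

lemma measure_rearr_le_copula:
  "measure (rearr_space M) {p \<in> space (rearr_space M). rearr1 X Y p \<le> x \<and> rearr2 X Y p \<le> y}
    = (C (F x) (F y) + C (F y) (F x)) / 2"
  by (simp add: measure_rearr_le measure_XY_le)

lemma dfun_rearr: "dfun (rearr_space M) (rearr1 X Y) = F" "dfun (rearr_space M) (rearr2 X Y) = F"
  by (simp_all add: fun_eq_iff dfun_rearr1 dfun_rearr2 dfun_Y)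

lemma rearr_copula_frechet:
  assumes "symmetrization_eq_frechet C r" "0 \<le> r" "r \<le> 1"
  shows "copula_of (rearr_space M) (rearr1 X Y) (rearr2 X Y) (frechet r)"
  using assms F_range is_copula_frechet
  by (simp add: copula_of_def measure_rearr_le_copula dfun_rearr symmetrization_eq_frechet_def)

lemma symmetrization_eq_frechet_if_rearr_copula:
  assumes "continuous_on UNIV F" "copula_of (rearr_space M) (rearr1 X Y) (rearr2 X Y) (frechet r)"
  shows "symmetrization_eq_frechet C r"
proof (rule symmetrization_eq_frechetI[OF is_copula_C])
  fix u v :: real
  assume "0 < u" "u < 1" "0 < v" "v < 1"
  then obtain x y where "F x = u" "F y = v"
    using F_surj[OF assms(1)] by metis
  then show "(C u v + C v u) / 2 = frechet r u v"
    using assms(2) measure_rearr_le_copula[of x y] by (simp add: copula_of_def dfun_rearr)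
qed

lemma symmetrization_eq_frechet_iff_rearr_copula:
  assumes "continuous_on UNIV F" "r \<le> 1"
  shows "symmetrization_eq_frechet C r \<longleftrightarrow>
    r \<in> {0..1} \<and> copula_of (rearr_space M) (rearr1 X Y) (rearr2 X Y) (frechet r)"
proof
  assume sym: "symmetrization_eq_frechet C r"
  then have "0 \<le> r"
    by (rule symmetrization_eq_frechet_imp_nonneg[OF is_copula_C _ assms(2)])
  with sym assms(2) show "r \<in> {0..1} \<and> copula_of (rearr_space M) (rearr1 X Y) (rearr2 X Y) (frechet r)"
    by (simp add: rearr_copula_frechet)
next
  assume "r \<in> {0..1} \<and> copula_of (rearr_space M) (rearr1 X Y) (rearr2 X Y) (frechet r)"
  then show "symmetrization_eq_frechet C r"
    using symmetrization_eq_frechet_if_rearr_copula[OF assms(1)] by blast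
qed

lemma distr_rearr_eq_frechet_mixture:
  assumes "symmetrization_eq_frechet C r" "0 \<le> r" "r \<le> 1"
  shows "distr (rearr_space M) borel (\<lambda>p. (rearr1 X Y p, rearr2 X Y p)) = frechet_mixture (distr M borel X) r"
proof (rule measure_eqI_atMost_real_pair)
  interpret P: real_distribution "distr M borel X"
    by simp
  show "finite_measure (distr (rearr_space M) borel (\<lambda>p. (rearr1 X Y p, rearr2 X Y p)))"
    "finite_measure (frechet_mixture (distr M borel X) r)"
    using prob_space_rearr_space P.prob_space_frechet_mixture
    by (auto intro!: prob_space.finite_measure prob_space.prob_space_distr)
  fix x y :: real
  have "{p \<in> space (rearr_space M). (rearr1 X Y p, rearr2 X Y p) \<in> {..(x, y)}}
      = {p \<in> space (rearr_space M). rearr1 X Y p \<le> x \<and> rearr2 X Y p \<le> y}"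
    by auto
  then have "measure (distr (rearr_space M) borel (\<lambda>p. (rearr1 X Y p, rearr2 X Y p))) {..(x, y)}
      = frechet r (F x) (F y)"
    using assms(1) F_range
    by (simp add: measure_distr vimage_def Int_def conj_commute measure_rearr_le_copula
        symmetrization_eq_frechet_def)
  also have "\<dots> = measure (frechet_mixture (distr M borel X) r) {..(x, y)}"
    using assms(2,3)
    by (simp add: P.measure_frechet_mixture_atMost dfun_eq_cdf[symmetric] F_min
        frechet_def M_cop_def Pi_cop_def)
  finally show "measure (distr (rearr_space M) borel (\<lambda>p. (rearr1 X Y p, rearr2 X Y p))) {..(x, y)}
      = measure (frechet_mixture (distr M borel X) r) {..(x, y)}" .
qed (auto simp: frechet_mixture_def)

lemma integral_mult_if_symmetrization_eq_frechet:
  assumes "symmetrization_eq_frechet C r" "0 \<le> r" "r \<le> 1"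
    and [measurable]: "g \<in> borel_measurable borel" and "integrable M (\<lambda>\<omega>. (g (X \<omega>))\<^sup>2)"
  shows "(\<integral>\<omega>. g (X \<omega>) * g (Y \<omega>) \<partial>M) = r * (\<integral>\<omega>. (g (X \<omega>))\<^sup>2 \<partial>M) + (1 - r) * (\<integral>\<omega>. g (X \<omega>) \<partial>M)\<^sup>2"
proof -
  interpret P: real_distribution "distr M borel X"
    by simp
  have [measurable]: "(\<lambda>z. g (fst z) * g (snd z)) \<in> borel_measurable (borel :: (real \<times> real) measure)"
    unfolding borel_prod[symmetric] by measurable
  have "(\<integral>\<omega>. g (X \<omega>) * g (Y \<omega>) \<partial>M) = (\<integral>p. g (rearr1 X Y p) * g (rearr2 X Y p) \<partial>rearr_space M)"
    by (rule integral_rearr_symmetric[symmetric]) auto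
  also have "\<dots> = (\<integral>z. g (fst z) * g (snd z)
      \<partial>distr (rearr_space M) borel (\<lambda>p. (rearr1 X Y p, rearr2 X Y p)))"
    by (subst integral_distr) auto
  also have "\<dots> = (\<integral>z. g (fst z) * g (snd z) \<partial>frechet_mixture (distr M borel X) r)"
    using assms(1-3) by (simp add: distr_rearr_eq_frechet_mixture)
  also have "\<dots> = r * (\<integral>x. (g x)\<^sup>2 \<partial>distr M borel X) + (1 - r) * (\<integral>x. g x \<partial>distr M borel X)\<^sup>2"
    using assms by (intro P.integral_frechet_mixture_mult) (auto simp: integrable_distr_eq)
  finally show ?thesis
    by (simp add: integral_distr)
qed

lemma corr_eq_if_symmetrization_eq_frechet:
  assumes "symmetrization_eq_frechet C r" "0 \<le> r" "r \<le> 1"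
    and [measurable]: "g \<in> borel_measurable borel" and "L2 M (\<lambda>\<omega>. g (X \<omega>))"
  shows "corr M (\<lambda>\<omega>. g (X \<omega>)) (\<lambda>\<omega>. g (Y \<omega>)) = r"
proof -
  let ?E = "\<integral>\<omega>. (g (X \<omega>))\<^sup>2 \<partial>M" and ?m = "\<integral>\<omega>. g (X \<omega>) \<partial>M"
  have sq: "integrable M (\<lambda>\<omega>. (g (X \<omega>))\<^sup>2)" "integrable M (\<lambda>\<omega>. (g (Y \<omega>))\<^sup>2)"
    using assms(5) integrable_Y_iff[of "\<lambda>x. (g x)\<^sup>2"] by (auto simp: L2_def)
  have var: "var M (\<lambda>\<omega>. g (X \<omega>)) = ?E - ?m\<^sup>2" "var M (\<lambda>\<omega>. g (Y \<omega>)) = ?E - ?m\<^sup>2"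
    using sq integral_Y[of g] integral_Y[of "\<lambda>x. (g x)\<^sup>2"]
    by (simp_all add: var_eq_cov cov_eq power2_eq_square)
  have "cov M (\<lambda>\<omega>. g (X \<omega>)) (\<lambda>\<omega>. g (Y \<omega>)) = r * (?E - ?m\<^sup>2)"
    using assms sq integral_Y[of g]
    by (simp add: cov_eq integral_mult_if_symmetrization_eq_frechet algebra_simps power2_eq_square)
  moreover have "0 < ?E - ?m\<^sup>2"
    using assms(5) var(1) by (simp add: L2_def)
  ultimately show ?thesis
    using corr_eq_iff_cov_eq[OF var] by blast
qed

lemma IC_if_symmetrization_eq_frechet:
  assumes "symmetrization_eq_frechet C r" "r \<le> 1" "L2 M X"
  shows "IC M r X Y"
proof -
  have "0 \<le> r"
    using symmetrization_eq_frechet_imp_nonneg[OF is_copula_C assms(1,2)] .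
  moreover have "corr M X Y = r"
    using corr_eq_if_symmetrization_eq_frechet[of r "\<lambda>x. x"] assms \<open>0 \<le> r\<close> by simp
  ultimately show ?thesis
    using assms(1,2) corr_eq_if_symmetrization_eq_frechet by (simp add: IC_def)
qed

lemma grid_sum_eq_if_IC:
  assumes "IC M r X Y" "0 < F a" "F a < 1" "0 < F b" "F b < 1"
  shows "grid_sum C (F a) (F b) = grid_sum (frechet r) (F a) (F b)"
proof -
  let ?f = "\<lambda>\<omega>. two_step a b (X \<omega>)" and ?h = "\<lambda>\<omega>. two_step a b (Y \<omega>)"
  let ?V = "grid_sum M_cop (F a) (F b) - (F a + F b)\<^sup>2"
  have var: "var M ?f = ?V" "var M ?h = ?V"
    by (simp_all add: var_eq_cov cov_two_step measure_le_min dfun_Y grid_sum_def M_cop_def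
        power2_eq_square)
  have "0 < ?V"
    using grid_sum_M_cop_gt assms(2-5) by simp
  then have "L2 M ?f" "L2 M ?h"
    using var by (simp_all add: L2_def integrable_two_step_square)
  then have "corr M ?f ?h = r"
    using assms(1) by (simp add: IC_def)
  then have "cov M ?f ?h = r * ?V"
    using corr_eq_iff_cov_eq[OF var \<open>0 < ?V\<close>] by blast
  moreover have "cov M ?f ?h = grid_sum C (F a) (F b) - (F a + F b)\<^sup>2"
    by (simp add: cov_two_step measure_XY_le dfun_Y grid_sum_def power2_eq_square)
  ultimately show ?thesis
    by (simp add: grid_sum_frechet algebra_simps)
qed

lemma symmetrization_eq_frechet_if_IC:
  assumes "continuous_on UNIV F" "IC M r X Y"
  shows "symmetrization_eq_frechet C r"
proof (rule symmetrization_eq_frechetI[OF is_copula_C])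
  have grid: "grid_sum C u v = grid_sum (frechet r) u v" if uv: "u \<in> {0<..<1}" "v \<in> {0<..<1}" for u v
  proof -
    obtain a b where "F a = u" "F b = v"
      using F_surj[OF assms(1)] uv by (meson greaterThanLessThan_iff)
    with uv show ?thesis
      using grid_sum_eq_if_IC[OF assms(2), of a b] by simp
  qed
  fix u v :: real
  assume "0 < u" "u < 1" "0 < v" "v < 1"
  \<comment> \<open>The grids \<open>{u}\<^sup>2\<close> and \<open>{v}\<^sup>2\<close> give the diagonal values, the rest of \<open>{u, v}\<^sup>2\<close> is the claim.\<close>
  then have "C u v + C v u = frechet r u v + frechet r v u"
    using grid[of u u] grid[of v v] grid[of u v] by (simp add: grid_sum_def)
  then show "(C u v + C v u) / 2 = frechet r u v"
    by (simp add: frechet_def M_cop_def Pi_cop_def min.commute mult.commute)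
qed

lemma IC_iff_symmetrization_eq_frechet:
  assumes "continuous_on UNIV F" "r \<le> 1" "L2 M X"
  shows "IC M r X Y \<longleftrightarrow> symmetrization_eq_frechet C r"
  using IC_if_symmetrization_eq_frechet[OF _ assms(2,3)] symmetrization_eq_frechet_if_IC[OF assms(1)]
  by blast

end

theorem corollary2:
  fixes M :: "'a measure" and X Y :: "'a \<Rightarrow> real"
    and C :: "real \<Rightarrow> real \<Rightarrow> real" and r :: real
  assumes "prob_space M"
    and "L2 M X" and "L2 M Y"
    and "\<forall>x. dfun M X x = dfun M Y x"
    and "continuous_on UNIV (dfun M X)" and "strict_mono (dfun M X)"
    and "copula_of M X Y C"
    and "r \<in> {-1..1}"
  shows "(IC M r X Y \<longleftrightarrow>
           (\<forall>u\<in>{0..1}. \<forall>v\<in>{0..1}. (C u v + C v u) / 2 = r * M_cop u v + (1 - r) * Pi_cop u v))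
       \<and> ((\<forall>u\<in>{0..1}. \<forall>v\<in>{0..1}. (C u v + C v u) / 2 = r * M_cop u v + (1 - r) * Pi_cop u v)
           \<longleftrightarrow> r \<in> {0..1} \<and> copula_of (rearr_space M) (rearr1 X Y) (rearr2 X Y) (frechet r))"
proof -
  interpret common_marginal_copula M X Y C
    using assms(1-4,7) unfolding common_marginal_copula_def common_marginal_copula_axioms_def L2_def
    by (simp add: fun_eq_iff)
  have "r \<le> 1"
    using assms(8) by simp
  have "(\<forall>u\<in>{0..1}. \<forall>v\<in>{0..1}. (C u v + C v u) / 2 = r * M_cop u v + (1 - r) * Pi_cop u v)
      \<longleftrightarrow> symmetrization_eq_frechet C r"
    by (simp add: symmetrization_eq_frechet_def frechet_def)
  then show ?thesis
    using IC_iff_symmetrization_eq_frechet[OF assms(5) \<open>r \<le> 1\<close> assms(2)]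
      symmetrization_eq_frechet_iff_rearr_copula[OF assms(5) \<open>r \<le> 1\<close>]
    by simp
qed

end
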